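(* Assume $\alpha\neq1$ and $\mu\neq0$. Fix $k\ge1$, let $w_j=1$ and $t_j=j$ for $j=1,\dots,k$ (and $t_0=0$), and choose $a_j=\exp(\mu_j)$ for $j=1,\dots,k-1$, where $\mu_j$ is the location parameter of $\log Z_j^*$ (determined by $a_{j+1},\dots,a_{k-1}$ through the backward recursion). Then $Z_0^*\le P^*$ almost surely and $\log Z_0^*\sim\mathcal S(\alpha,-\beta,\sigma_0,\mu_0)$ with $$\mu_0=-\mu+\log\frac{e^{-\mu k}-1}{e^{-\mu}-1},\qquad \sigma_0^\alpha=\sigma^\alpha\left(1+\sum_{j=1}^{k-1}\left(1-\frac{e^{-\mu j}-1}{e^{-\mu k}-1}\right)^\alpha\right).$$
   Context: Stable laws: for $\alpha^*\in(0,2]$, $\beta^*\in[-1,1]$, $\sigma^*>0$, $\mu^*\in\mathbb R$, write $Z\sim\mathcal S(\alpha^*,\beta^*,\sigma^*,\mu^* )$ if the real random variable $Z$ has characteristic function $\mathbb E e^{i\theta Z}=\exp\{i\theta\mu^*-|\sigma^*\theta|^{\alpha^*}(1-i\beta^*\operatorname{sgn}(\theta)\tan\frac{\pi\alpha^*}{2})\}$ when $\alpha^*\neq1$, and $\mathbb E e^{i\theta Z}=\exp\{i\theta\mu^*-|\sigma^*\theta|(1+i\beta^*\frac{2}{\pi}\operatorname{sgn}(\theta)\log|\theta|)\}$ when $\alpha^*=1$. Wealth process: on a probability space $(\Omega,\mathcal F,\mathbb P)$, $X:[0,\infty)\times\Omega\to(0,\infty)$ is a process such that $\log X$ is a Lévy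 process (càdlàg paths, independent increments) with, for all $0\le s<t$, $\log\frac{X(t)}{X(s)}\sim\mathcal S(\alpha,\beta,\sigma(t-s)^{1/\alpha},\mu(t-s))$, where $\alpha\in(0,2]$, $\beta\in[-1,1]$, $\sigma>0$, $\mu\in\mathbb R$ are fixed. Set $X_j=X(t_j)/X(t_{j-1})$ for $j\ge1$. Required initial investment: for withdrawals $w_1,\dots,w_k>0$ at times $t_1<\dots<t_k$, $W_{k-1}^*=w_kX_k^{-1}$ and $W_{j-1}^*=X_j^{-1}(W_j^*+w_j)$ for $j=k-1,\dots,1$; set $P^*=W_0^*$. Lower bound: for constants $a_1,\dots,a_{k-1}>0$, with $b_j=\frac{a_j}{a_j+w_j}$, set $Z_{k-1}^*=W_{k-1}^*$ and $Z_{j-1}^*=X_j^{-1}(a_j+w_j)\left(\frac{Z_j^*}{a_j}\right)^{b_j}$ for $j=k-1,\dots,1$. *)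

theory Defs
  imports "HOL-Probability.Probability"
begin

definition stable_cf :: "real \<Rightarrow> real \<Rightarrow> real \<Rightarrow> real \<Rightarrow> real \<Rightarrow> complex" where
  "stable_cf \<alpha> \<beta> \<sigma> \<mu> \<theta> =
     (if \<alpha> \<noteq> 1 then
        exp (\<i> * of_real (\<theta> * \<mu>) - of_real (\<bar>\<sigma> * \<theta>\<bar> powr \<alpha>)
               * (1 - \<i> * of_real (\<beta> * sgn \<theta> * tan (pi * \<alpha> / 2))))
      else
        exp (\<i> * of_real (\<theta> * \<mu>) - of_real \<bar>\<sigma> * \<theta>\<bar>
               * (1 + \<i> * of_real (\<beta> * (2 / pi) * sgn \<theta> * ln \<bar>\<theta>\<bar>))))"

definition has_stable_law ::
  "'a measure \<Rightarrow> ('a \<Rightarrow> real) \<Rightarrow> real \<Rightarrow> real \<Rightarrow> real \<Rightarrow> real \<Rightarrow> bool" where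
  "has_stable_law M Z \<alpha> \<beta> \<sigma> \<mu> \<longleftrightarrow>
     0 < \<alpha> \<and> \<alpha> \<le> 2 \<and> -1 \<le> \<beta> \<and> \<beta> \<le> 1 \<and> 0 < \<sigma> \<and>
     Z \<in> borel_measurable M \<and>
     (\<forall>\<theta>. char (distr M borel Z) \<theta> = stable_cf \<alpha> \<beta> \<sigma> \<mu> \<theta>)"

definition stable_wealth_process ::
  "'a measure \<Rightarrow> (real \<Rightarrow> 'a \<Rightarrow> real) \<Rightarrow> real \<Rightarrow> real \<Rightarrow> real \<Rightarrow> real \<Rightarrow> bool" where
  "stable_wealth_process M X \<alpha> \<beta> \<sigma> \<mu> \<longleftrightarrow>
     prob_space M \<and>
     (\<forall>t\<ge>0. X t \<in> borel_measurable M) \<and>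
     (\<forall>t\<ge>0. \<forall>\<omega>\<in>space M. 0 < X t \<omega>) \<and>
     \<comment> \<open>cadlag paths of log X\<close>
     (\<forall>\<omega>\<in>space M. \<forall>t\<ge>0.
        ((\<lambda>s. ln (X s \<omega>)) \<longlongrightarrow> ln (X t \<omega>)) (at_right t) \<and>
        (0 < t \<longrightarrow> (\<exists>l. ((\<lambda>s. ln (X s \<omega>)) \<longlongrightarrow> l) (at_left t)))) \<and>
     \<comment> \<open>independent increments of log X\<close>
     (\<forall>(n::nat) (ts::nat \<Rightarrow> real).
        (\<forall>i\<le>n. 0 \<le> ts i) \<and> (\<forall>i<n. ts i < ts (Suc i)) \<longrightarrow>
        prob_space.indep_vars M (\<lambda>_. borel)
          (\<lambda>i \<omega>. ln (X (ts (Suc i)) \<omega>) - ln (X (ts i) \<omega>)) {..<n}) \<and>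
     \<comment> \<open>stable increments\<close>
     (\<forall>s t. 0 \<le> s \<and> s < t \<longrightarrow>
        has_stable_law M (\<lambda>\<omega>. ln (X t \<omega> / X s \<omega>)) \<alpha> \<beta> (\<sigma> * (t - s) powr (1 / \<alpha>)) (\<mu> * (t - s)))"

text \<open>Gross returns X_j = X(t_j)/X(t_{j-1}) (used for j \<ge> 1).\<close>
definition returns :: "(real \<Rightarrow> 'a \<Rightarrow> real) \<Rightarrow> (nat \<Rightarrow> real) \<Rightarrow> 'a \<Rightarrow> nat \<Rightarrow> real" where
  "returns X t \<omega> j = X (t j) \<omega> / X (t (j - 1)) \<omega>"

text \<open>Wrec k w x m = W^*_{k-1-m}, for m \<le> k-1; x j stands for X_j.\<close>
fun Wrec :: "nat \<Rightarrow> (nat \<Rightarrow> real) \<Rightarrow> (nat \<Rightarrow> real) \<Rightarrow> nat \<Rightarrow> real" where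
  "Wrec k w x 0 = w k / x k"
| "Wrec k w x (Suc m) = (Wrec k w x m + w (k - 1 - m)) / x (k - 1 - m)"

definition W_star :: "nat \<Rightarrow> (nat \<Rightarrow> real) \<Rightarrow> (nat \<Rightarrow> real) \<Rightarrow> nat \<Rightarrow> real" where
  "W_star k w x j = Wrec k w x (k - 1 - j)"

definition P_star :: "nat \<Rightarrow> (nat \<Rightarrow> real) \<Rightarrow> (nat \<Rightarrow> real) \<Rightarrow> real" where
  "P_star k w x = W_star k w x 0"

text \<open>Zrec k w a x m = Z^*_{k-1-m}, with b_j = a_j / (a_j + w_j).\<close>
fun Zrec :: "nat \<Rightarrow> (nat \<Rightarrow> real) \<Rightarrow> (nat \<Rightarrow> real) \<Rightarrow> (nat \<Rightarrow> real) \<Rightarrow> nat \<Rightarrow> real" where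
  "Zrec k w a x 0 = w k / x k"
| "Zrec k w a x (Suc m) =
     (let j = k - 1 - m in
        (a j + w j) * (Zrec k w a x m / a j) powr (a j / (a j + w j)) / x j)"

definition Z_star :: "nat \<Rightarrow> (nat \<Rightarrow> real) \<Rightarrow> (nat \<Rightarrow> real) \<Rightarrow> (nat \<Rightarrow> real) \<Rightarrow> nat \<Rightarrow> real" where
  "Z_star k w a x j = Zrec k w a x (k - 1 - j)"

end

theory Submission
  imports Defs
begin

text \<open>Each backward step of the lower bound replaces \<open>W + w\<close> by \<open>(a + w) (Z/a)\<^sup>b\<close> with
  \<open>b = a/(a + w)\<close>, which is at most \<open>Z + w\<close> by weighted AM-GM; hence \<open>Z\<^sup>* \<le> W\<^sup>*\<close> pathwise.
  Taking logarithms, the recursion for \<open>log Z\<^sup>*\<close> is affine, so \<open>log Z\<^sub>j\<^sup>*\<close> is a constant minus a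
  positive combination of the independent stable log-returns of periods \<open>j+1, \<dots>, k\<close>, hence stable
  with skewness \<open>-\<beta>\<close>. With \<open>q = exp (-\<mu>)\<close> and \<open>a\<^sub>j = exp \<mu>\<^sub>j\<close> the location is
  \<open>\<mu>\<^sub>j = log (q + \<dots> + q\<^bsup>k-j\<^esup>)\<close>, and the products of the exponents \<open>b\<close> telescope to the weights
  \<open>(q\<^sup>k - q\<^sup>i) / (q\<^sup>k - q\<^sup>j)\<close>.\<close>

section \<open>Affine combinations of independent stable variables\<close>

lemma has_stable_law_cong:
  assumes "\<And>\<omega>. \<omega> \<in> space M \<Longrightarrow> f \<omega> = g \<omega>"
  shows "has_stable_law M f \<alpha> \<beta> \<sigma> \<mu> \<longleftrightarrow> has_stable_law M g \<alpha> \<beta> \<sigma> \<mu>"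
proof -
  have "f \<in> borel_measurable M \<longleftrightarrow> g \<in> borel_measurable M"
    using assms by (intro measurable_cong) auto
  moreover have "distr M borel f = distr M borel g"
    using assms by (intro distr_cong) auto
  ultimately show ?thesis unfolding has_stable_law_def by simp
qed

lemma char_distr_affine_sum:
  assumes "prob_space M" "finite I" "prob_space.indep_vars M (\<lambda>_. borel) Y I"
  shows "char (distr M borel (\<lambda>\<omega>. d + (\<Sum>i\<in>I. c i * Y i \<omega>))) \<theta>
       = exp (\<i> * of_real (\<theta> * d)) * (\<Prod>i\<in>I. char (distr M borel (Y i)) (c i * \<theta>))"
proof -
  interpret prob_space M by fact
  have Y_meas: "\<And>i. i \<in> I \<Longrightarrow> Y i \<in> borel_measurable M"
    using assms(3) unfolding indep_vars_def by auto
  have "indep_vars (\<lambda>_. borel) (\<lambda>i \<omega>. c i * Y i \<omega>) I"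
    using indep_vars_compose2[OF assms(3), where Y="\<lambda>i x. c i * x" and N="\<lambda>_. borel"] by auto
  then have sum: "char (distr M borel (\<lambda>\<omega>. \<Sum>i\<in>I. c i * Y i \<omega>)) \<theta>
      = (\<Prod>i\<in>I. char (distr M borel (\<lambda>\<omega>. c i * Y i \<omega>)) \<theta>)"
    by (rule char_distr_sum)
  have scale: "char (distr M borel (\<lambda>\<omega>. c i * Y i \<omega>)) \<theta> = char (distr M borel (Y i)) (c i * \<theta>)"
    if "i \<in> I" for i
    using Y_meas[OF that] by (simp add: char_def integral_distr mult.assoc mult.left_commute)
  have sum_meas: "(\<lambda>\<omega>. \<Sum>i\<in>I. c i * Y i \<omega>) \<in> borel_measurable M"
    using Y_meas by measurable
  have "char (distr M borel (\<lambda>\<omega>. d + (\<Sum>i\<in>I. c i * Y i \<omega>))) \<theta>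
      = (CLINT \<omega>|M. exp (\<i> * of_real (\<theta> * d)) * iexp (\<theta> * (\<Sum>i\<in>I. c i * Y i \<omega>)))"
    using sum_meas by (simp add: char_def integral_distr distrib_left exp_add[symmetric] algebra_simps)
  also have "\<dots> = exp (\<i> * of_real (\<theta> * d)) * char (distr M borel (\<lambda>\<omega>. \<Sum>i\<in>I. c i * Y i \<omega>)) \<theta>"
    using sum_meas by (simp add: char_def integral_distr)
  finally show ?thesis using sum scale by simp
qed

lemma stable_cf_neg_weighted_prod:
  assumes "\<alpha> \<noteq> 1" "0 < \<alpha>" "0 < \<sigma>" "finite I" "\<forall>i\<in>I. 0 < w i"
  shows "exp (\<i> * of_real (\<theta> * (L + \<mu> * (\<Sum>i\<in>I. w i)))) * (\<Prod>i\<in>I. stable_cf \<alpha> \<beta> \<sigma> \<mu> (- w i * \<theta>))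
       = stable_cf \<alpha> (-\<beta>) (\<sigma> * (\<Sum>i\<in>I. w i powr \<alpha>) powr (1/\<alpha>)) L \<theta>"
proof -
  define S where "S = (\<Sum>i\<in>I. w i powr \<alpha>)"
  define T where "T = \<bar>\<sigma> * \<theta>\<bar> powr \<alpha>"
  define E where "E = of_real T * (1 + \<i> * of_real (\<beta> * sgn \<theta> * tan (pi * \<alpha> / 2)))"
  have factor: "stable_cf \<alpha> \<beta> \<sigma> \<mu> (- w i * \<theta>)
      = exp (- \<i> * of_real \<theta> * of_real \<mu> * of_real (w i) - of_real (w i powr \<alpha>) * E)"
    if "i \<in> I" for i
  proof -
    have wi: "0 < w i" using assms(5) that by auto
    have "\<bar>\<sigma> * (- w i * \<theta>)\<bar> powr \<alpha> = w i powr \<alpha> * T"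
      unfolding T_def using wi by (simp add: abs_mult powr_mult[symmetric] mult.left_commute)
    moreover have "sgn (- w i * \<theta>) = - sgn \<theta>" using wi by (simp add: sgn_mult)
    ultimately show ?thesis
      using assms(1) unfolding stable_cf_def E_def by (simp add: algebra_simps)
  qed
  have scale: "\<bar>\<sigma> * S powr (1/\<alpha>) * \<theta>\<bar> powr \<alpha> = S * T"
  proof -
    have "0 \<le> S" unfolding S_def by (intro sum_nonneg) auto
    then show ?thesis
      using assms(2,3) unfolding T_def by (simp add: abs_mult powr_mult powr_powr)
  qed
  have "exp (\<i> * of_real (\<theta> * (L + \<mu> * (\<Sum>i\<in>I. w i)))) * (\<Prod>i\<in>I. stable_cf \<alpha> \<beta> \<sigma> \<mu> (- w i * \<theta>))
      = exp (\<i> * of_real (\<theta> * (L + \<mu> * (\<Sum>i\<in>I. w i)))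
           + (\<Sum>i\<in>I. - \<i> * of_real \<theta> * of_real \<mu> * of_real (w i) - of_real (w i powr \<alpha>) * E))"
    using assms(4) by (simp only: prod.cong[OF refl factor] exp_sum[symmetric] exp_add)
  also have "\<dots> = exp (\<i> * of_real (\<theta> * L) - of_real S * E)"
    unfolding S_def by (simp add: sum_subtractf sum_negf sum_distrib_left sum_distrib_right algebra_simps)
  also have "\<dots> = stable_cf \<alpha> (-\<beta>) (\<sigma> * S powr (1/\<alpha>)) L \<theta>"
    using assms(1) unfolding stable_cf_def scale E_def by (simp add: algebra_simps)
  finally show ?thesis unfolding S_def .
qed

lemma has_stable_law_neg_weighted_sum:
  assumes "prob_space M" "finite I" "I \<noteq> {}" "prob_space.indep_vars M (\<lambda>_. borel) Y I"
    and law: "\<And>i. i \<in> I \<Longrightarrow> has_stable_law M (Y i) \<alpha> \<beta> \<sigma> \<mu>"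
    and "\<alpha> \<noteq> 1" and w: "\<forall>i\<in>I. 0 < w i"
    and f: "\<And>\<omega>. \<omega> \<in> space M \<Longrightarrow> f \<omega> = L - (\<Sum>i\<in>I. w i * (Y i \<omega> - \<mu>))"
  shows "has_stable_law M f \<alpha> (-\<beta>) (\<sigma> * (\<Sum>i\<in>I. w i powr \<alpha>) powr (1/\<alpha>)) L"
proof -
  interpret prob_space M by fact
  obtain i0 where "i0 \<in> I" using assms(3) by blast
  then have par: "0 < \<alpha>" "\<alpha> \<le> 2" "-1 \<le> \<beta>" "\<beta> \<le> 1" "0 < \<sigma>"
    using law unfolding has_stable_law_def by auto
  define d where "d = L + \<mu> * (\<Sum>i\<in>I. w i)"
  have f_affine: "f \<omega> = d + (\<Sum>i\<in>I. - w i * Y i \<omega>)" if "\<omega> \<in> space M" for \<omega>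
    using f[OF that] unfolding d_def
    by (simp add: sum_subtractf sum_distrib_left sum_negf right_diff_distrib algebra_simps)
  have Y_meas: "\<And>i. i \<in> I \<Longrightarrow> Y i \<in> borel_measurable M"
    using assms(4) unfolding indep_vars_def by auto
  have "char (distr M borel (\<lambda>\<omega>. d + (\<Sum>i\<in>I. - w i * Y i \<omega>))) \<theta>
      = stable_cf \<alpha> (-\<beta>) (\<sigma> * (\<Sum>i\<in>I. w i powr \<alpha>) powr (1/\<alpha>)) L \<theta>" for \<theta>
  proof -
    have "char (distr M borel (\<lambda>\<omega>. d + (\<Sum>i\<in>I. - w i * Y i \<omega>))) \<theta>
        = exp (\<i> * of_real (\<theta> * d)) * (\<Prod>i\<in>I. char (distr M borel (Y i)) (- w i * \<theta>))"
      by (rule char_distr_affine_sum[OF assms(1,2,4)])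
    also have "\<dots> = exp (\<i> * of_real (\<theta> * d)) * (\<Prod>i\<in>I. stable_cf \<alpha> \<beta> \<sigma> \<mu> (- w i * \<theta>))"
      using law unfolding has_stable_law_def by simp
    finally show ?thesis
      unfolding d_def stable_cf_neg_weighted_prod[OF \<open>\<alpha> \<noteq> 1\<close> par(1,5) assms(2) w] .
  qed
  moreover have "0 < (\<Sum>i\<in>I. w i powr \<alpha>)"
    using assms(2,3) w by (intro sum_pos) auto
  moreover have "(\<lambda>\<omega>. d + (\<Sum>i\<in>I. - w i * Y i \<omega>)) \<in> borel_measurable M"
    using Y_meas by measurable
  ultimately have "has_stable_law M (\<lambda>\<omega>. d + (\<Sum>i\<in>I. - w i * Y i \<omega>)) \<alpha> (-\<beta>)
      (\<sigma> * (\<Sum>i\<in>I. w i powr \<alpha>) powr (1/\<alpha>)) L"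
    using par unfolding has_stable_law_def by auto
  then show ?thesis by (subst has_stable_law_cong[OF f_affine])
qed

section \<open>Uniqueness of the location\<close>

lemma linear_coeff_zero_if_in_2pi_Ints:
  fixes D E \<alpha> :: real
  assumes "0 < \<alpha>" "\<alpha> \<noteq> 1"
    and periodic: "\<And>\<theta>. 0 < \<theta> \<Longrightarrow> \<exists>n::int. \<theta> * D + \<theta> powr \<alpha> * E = of_int (2 * n) * pi"
  shows "D = 0"
proof -
  define t where "t = min (pi / (\<bar>D\<bar> + 1)) ((pi / (\<bar>E\<bar> + 1)) powr (1/\<alpha>))"
  have t_pos: "0 < t" unfolding t_def by (simp add: add_pos_nonneg)
  \<comment> \<open>below \<open>t\<close> both terms are smaller than \<open>pi\<close>, so the only admissible multiple of \<open>2 pi\<close> is \<open>0\<close>\<close>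
  have vanish: "\<theta> * D + \<theta> powr \<alpha> * E = 0" if "0 < \<theta>" "\<theta> \<le> t" for \<theta>
  proof -
    obtain n :: int where n: "\<theta> * D + \<theta> powr \<alpha> * E = of_int (2 * n) * pi"
      using periodic[OF \<open>0 < \<theta>\<close>] by blast
    have "\<theta> * \<bar>D\<bar> \<le> pi / (\<bar>D\<bar> + 1) * \<bar>D\<bar>"
      using that unfolding t_def by (intro mult_right_mono) auto
    also have "\<dots> < pi" by (simp add: field_simps add_pos_nonneg)
    finally have D_small: "\<theta> * \<bar>D\<bar> < pi" .
    have "\<theta> powr \<alpha> \<le> ((pi / (\<bar>E\<bar> + 1)) powr (1/\<alpha>)) powr \<alpha>"
      using that assms(1) unfolding t_def by (intro powr_mono2) auto
    also have "\<dots> = pi / (\<bar>E\<bar> + 1)"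
      using assms(1) by (simp add: powr_powr add_pos_nonneg)
    finally have "\<theta> powr \<alpha> * \<bar>E\<bar> \<le> pi / (\<bar>E\<bar> + 1) * \<bar>E\<bar>" by (intro mult_right_mono) auto
    also have "\<dots> < pi" by (simp add: field_simps add_pos_nonneg)
    finally have E_small: "\<theta> powr \<alpha> * \<bar>E\<bar> < pi" .
    have "\<bar>\<theta> * D + \<theta> powr \<alpha> * E\<bar> \<le> \<theta> * \<bar>D\<bar> + \<theta> powr \<alpha> * \<bar>E\<bar>"
      using that by (simp add: abs_mult abs_triangle_ineq[THEN order_trans])
    with D_small E_small have "\<bar>\<theta> * D + \<theta> powr \<alpha> * E\<bar> < 2 * pi" by linarith
    with n have "\<bar>real_of_int n\<bar> * (2 * pi) < 1 * (2 * pi)"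
      by (simp add: abs_mult)
    then have "n = 0" by (simp only: mult_less_cancel_right) (use pi_gt_zero in auto)
    with n show ?thesis by simp
  qed
  have at_t: "t * D + t powr \<alpha> * E = 0" using vanish[OF t_pos] by simp
  have "(t/2) * D + (t/2) powr \<alpha> * E = 0" using vanish[of "t/2"] t_pos by simp
  moreover have "(t/2) powr \<alpha> = t powr \<alpha> / 2 powr \<alpha>" using t_pos by (simp add: powr_divide)
  ultimately have at_half: "t * D + 2 * (t powr \<alpha> * E) / 2 powr \<alpha> = 0" by (simp add: field_simps)
  have "t powr \<alpha> * E * (1 - 2 / 2 powr \<alpha>)
      = (t * D + t powr \<alpha> * E) - (t * D + 2 * (t powr \<alpha> * E) / 2 powr \<alpha>)"
    by (simp add: algebra_simps)
  then have "t powr \<alpha> * E * (1 - 2 / 2 powr \<alpha>) = 0" using at_t at_half by simp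
  moreover have "2 powr \<alpha> \<noteq> 2"
    using powr_inj[of 2 \<alpha> 1] assms(2) by auto
  then have "1 - 2 / 2 powr \<alpha> \<noteq> 0" by (simp add: field_simps)
  ultimately have "E = 0" using t_pos by simp
  then show ?thesis using at_t t_pos by simp
qed

lemma norm_stable_cf: "norm (stable_cf \<alpha> \<beta> \<sigma> \<mu> \<theta>) = exp (- (\<bar>\<sigma> * \<theta>\<bar> powr \<alpha>))"
  unfolding stable_cf_def by (cases "\<alpha> = 1") (auto simp: norm_exp_eq_Re)

lemma has_stable_law_location_unique:
  assumes law: "has_stable_law M Z \<alpha> \<beta> \<sigma> \<mu>" and law': "has_stable_law M Z \<alpha>' \<beta>' \<sigma>' \<mu>'"
    and "\<alpha> \<noteq> 1"
  shows "\<mu> = \<mu>'"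
proof -
  have pos: "0 < \<alpha>" "0 < \<sigma>" "0 < \<alpha>'" "0 < \<sigma>'"
    using law law' unfolding has_stable_law_def by auto
  have cf_eq: "stable_cf \<alpha> \<beta> \<sigma> \<mu> \<theta> = stable_cf \<alpha>' \<beta>' \<sigma>' \<mu>' \<theta>" for \<theta>
    using law law' unfolding has_stable_law_def by metis
  have modulus: "\<bar>\<sigma> * \<theta>\<bar> powr \<alpha> = \<bar>\<sigma>' * \<theta>\<bar> powr \<alpha>'" for \<theta>
    using arg_cong[OF cf_eq[of \<theta>], of norm] unfolding norm_stable_cf by simp
  have scale: "\<sigma> powr \<alpha> = \<sigma>' powr \<alpha>'" using modulus[of 1] pos by simp
  moreover have "2 powr \<alpha> * \<sigma> powr \<alpha> = 2 powr \<alpha>' * \<sigma>' powr \<alpha>'"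
    using modulus[of 2] pos by (simp add: powr_mult mult.commute)
  ultimately have "2 powr \<alpha> = 2 powr \<alpha>'" using pos by simp
  then have index: "\<alpha>' = \<alpha>" using powr_inj[of 2 \<alpha> \<alpha>'] by simp
  define tn where "tn = tan (pi * \<alpha> / 2)"
  \<comment> \<open>equal characteristic functions have arguments differing by a multiple of \<open>2 pi\<close>\<close>
  have "\<exists>n::int. \<theta> * (\<mu> - \<mu>') + \<theta> powr \<alpha> * (\<sigma> powr \<alpha> * (\<beta> - \<beta>') * tn) = of_int (2 * n) * pi"
    if "0 < \<theta>" for \<theta>
  proof -
    define z where "z = \<i> * of_real (\<theta> * \<mu>) - of_real (\<bar>\<sigma> * \<theta>\<bar> powr \<alpha>) * (1 - \<i> * of_real (\<beta> * sgn \<theta> * tn))"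
    define z' where "z' = \<i> * of_real (\<theta> * \<mu>') - of_real (\<bar>\<sigma>' * \<theta>\<bar> powr \<alpha>) * (1 - \<i> * of_real (\<beta>' * sgn \<theta> * tn))"
    have "exp z = exp z'" using cf_eq[of \<theta>] \<open>\<alpha> \<noteq> 1\<close> index unfolding stable_cf_def z_def z'_def tn_def by simp
    then have "exp (z - z') = 1" by (simp add: exp_diff)
    then obtain n :: int where n: "Im (z - z') = of_int (2 * n) * pi" unfolding exp_eq_1 by blast
    have "\<bar>\<sigma> * \<theta>\<bar> powr \<alpha> = \<sigma> powr \<alpha> * \<theta> powr \<alpha>" "\<bar>\<sigma>' * \<theta>\<bar> powr \<alpha> = \<sigma> powr \<alpha> * \<theta> powr \<alpha>"
      using pos that scale index by (simp_all add: abs_mult powr_mult)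
    then have "Im (z - z') = \<theta> * (\<mu> - \<mu>') + \<theta> powr \<alpha> * (\<sigma> powr \<alpha> * (\<beta> - \<beta>') * tn)"
      unfolding z_def z'_def using that by (simp add: algebra_simps)
    then show ?thesis using n by auto
  qed
  then have "\<mu> - \<mu>' = 0" by (intro linear_coeff_zero_if_in_2pi_Ints[OF pos(1) \<open>\<alpha> \<noteq> 1\<close>])
  then show ?thesis by simp
qed

section \<open>The backward recursions\<close>

lemma Z_star_last: "Z_star k w a x (k - 1) = w k / x k"
  unfolding Z_star_def by simp

lemma W_star_last: "W_star k w x (k - 1) = w k / x k"
  unfolding W_star_def by simp

lemma Z_star_step:
  assumes "n < k - 1"
  shows "Z_star k w a x n = (a (Suc n) + w (Suc n))
           * (Z_star k w a x (Suc n) / a (Suc n)) powr (a (Suc n) / (a (Suc n) + w (Suc n))) / x (Suc n)"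
proof -
  have "k - 1 - n = Suc (k - 1 - Suc n)" "k - 1 - (k - 1 - Suc n) = Suc n" using assms by auto
  then show ?thesis unfolding Z_star_def by (simp add: Let_def)
qed

lemma W_star_step:
  assumes "n < k - 1"
  shows "W_star k w x n = (W_star k w x (Suc n) + w (Suc n)) / x (Suc n)"
proof -
  have "k - 1 - n = Suc (k - 1 - Suc n)" "k - 1 - (k - 1 - Suc n) = Suc n" using assms by auto
  then show ?thesis unfolding W_star_def by simp
qed

lemma ln_Z_star_step:
  assumes "n < k - 1" "0 < x (Suc n)" "0 < a (Suc n)" "0 < w (Suc n)" "0 < Z_star k w a x (Suc n)"
  shows "ln (Z_star k w a x n) = ln (a (Suc n) + w (Suc n))
           + a (Suc n) / (a (Suc n) + w (Suc n)) * (ln (Z_star k w a x (Suc n)) - ln (a (Suc n)))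
           - ln (x (Suc n))"
  using assms by (simp add: Z_star_step ln_mult ln_div ln_powr)

lemma weighted_powr_le:
  fixes a w z :: real
  assumes "0 < a" "0 < w" "0 < z"
  shows "(a + w) * (z / a) powr (a / (a + w)) \<le> z + w"
proof -
  have "(z / a) powr (a / (a + w)) * 1 powr (w / (a + w)) \<le> a / (a + w) * (z / a) + w / (a + w) * 1"
    using assms by (intro Youngs_inequality_0) (auto simp: add_divide_distrib[symmetric])
  then have "(a + w) * (z / a) powr (a / (a + w)) \<le> (a + w) * (a / (a + w) * (z / a) + w / (a + w))"
    using assms by (intro mult_left_mono) auto
  also have "\<dots> = z + w"
    using assms by (simp add: distrib_left)
  finally show ?thesis .
qed

lemma Z_star_le_W_star:
  assumes "1 \<le> k" "n \<le> k - 1"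
    and x: "\<forall>j\<in>{1..k}. 0 < x j" and w: "\<forall>j\<in>{1..k}. 0 < w j" and a: "\<forall>j\<in>{1..k-1}. 0 < a j"
  shows "0 < Z_star k w a x n \<and> Z_star k w a x n \<le> W_star k w x n"
  using \<open>n \<le> k - 1\<close>
proof (induction n rule: inc_induct)
  case base
  show ?case using assms(1) x w unfolding Z_star_last W_star_last by simp
next
  case (step n)
  define Z where "Z = Z_star k w a x (Suc n)"
  have pos: "0 < x (Suc n)" "0 < w (Suc n)" "0 < a (Suc n)" using step.hyps x w a by auto
  have Z: "0 < Z" "Z \<le> W_star k w x (Suc n)" using step.IH unfolding Z_def by auto
  have "(a (Suc n) + w (Suc n)) * (Z / a (Suc n)) powr (a (Suc n) / (a (Suc n) + w (Suc n)))
      \<le> W_star k w x (Suc n) + w (Suc n)"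
    using weighted_powr_le[OF pos(3,2) Z(1)] Z(2) by linarith
  then show ?case
    using step.hyps pos Z(1) unfolding Z_star_step[OF step.hyps(2)] W_star_step[OF step.hyps(2)] Z_def
    by (simp add: divide_right_mono)
qed

section \<open>Geometric discounting\<close>

text \<open>With \<open>q = exp (-\<mu>)\<close>, \<open>discounted_sum q k j = q + q\<^sup>2 + \<dots> + q\<^bsup>k-j\<^esup>\<close>; its logarithm is
  the location \<open>\<mu>\<^sub>j\<close> of \<open>log Z\<^sub>j\<^sup>*\<close>, and \<open>discount_weight q k j i\<close> is the weight of the
  centred log-return of period \<open>i + 1\<close> in \<open>log Z\<^sub>j\<^sup>*\<close>.\<close>
definition discounted_sum :: "real \<Rightarrow> nat \<Rightarrow> nat \<Rightarrow> real" where
  "discounted_sum q k j = q * (q ^ k - q ^ j) / (q ^ j * (q - 1))"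

definition discount_weight :: "real \<Rightarrow> nat \<Rightarrow> nat \<Rightarrow> nat \<Rightarrow> real" where
  "discount_weight q k j i = (q ^ k - q ^ i) / (q ^ k - q ^ j)"

lemma power_diff_div_pos:
  fixes q :: real
  assumes "0 < q" "q \<noteq> 1" "j < k"
  shows "0 < (q ^ k - q ^ j) / (q - 1)"
proof (cases "q < 1")
  case True
  then have "q ^ k < q ^ j" using assms by simp
  with True show ?thesis by (simp add: divide_neg_neg)
next
  case False
  then have "1 < q" using assms(2) by simp
  then have "q ^ j < q ^ k" using assms by simp
  with \<open>1 < q\<close> show ?thesis by simp
qed

lemma discounted_sum_pos:
  fixes q :: real
  assumes "0 < q" "q \<noteq> 1" "j < k"
  shows "0 < discounted_sum q k j"
proof -
  have "discounted_sum q k j = q / q ^ j * ((q ^ k - q ^ j) / (q - 1))"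
    unfolding discounted_sum_def by simp
  also have "0 < \<dots>" using power_diff_div_pos[OF assms] assms(1) by (intro mult_pos_pos) auto
  finally show ?thesis .
qed

lemma discounted_sum_Suc_plus_one:
  fixes q :: real
  assumes "0 < q" "q \<noteq> 1"
  shows "discounted_sum q k (Suc n) + 1 = (q ^ k - q ^ n) / (q ^ n * (q - 1))"
proof -
  have nz: "q ^ n * (q - 1) \<noteq> 0" using assms by simp
  have "discounted_sum q k (Suc n) = (q ^ k - q ^ Suc n) / (q ^ n * (q - 1))"
    using assms unfolding discounted_sum_def by (simp add: mult.assoc)
  then show ?thesis using nz by (simp add: add_divide_eq_iff algebra_simps)
qed

lemma discounted_sum_Suc:
  fixes q :: real
  assumes "0 < q" "q \<noteq> 1"
  shows "discounted_sum q k n = q * (discounted_sum q k (Suc n) + 1)"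
  unfolding discounted_sum_Suc_plus_one[OF assms] by (simp add: discounted_sum_def)

lemma discount_weight_self:
  "0 < q \<Longrightarrow> q \<noteq> 1 \<Longrightarrow> j < k \<Longrightarrow> discount_weight q k j j = 1"
  using power_diff_div_pos[of q j k] unfolding discount_weight_def by auto

lemma discount_weight_pos:
  assumes "0 < q" "q \<noteq> 1" "i < k" "j < k"
  shows "0 < discount_weight q k j i"
proof -
  have "discount_weight q k j i = ((q ^ k - q ^ i) / (q - 1)) / ((q ^ k - q ^ j) / (q - 1))"
    using assms(2) unfolding discount_weight_def by simp
  also have "0 < \<dots>"
    using power_diff_div_pos[OF assms(1,2,3)] power_diff_div_pos[OF assms(1,2,4)] by (rule divide_pos_pos)
  finally show ?thesis .
qed

lemma discount_weight_Suc:
  fixes q :: real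
  assumes "0 < q" "q \<noteq> 1" "Suc n < k"
  shows "discounted_sum q k (Suc n) / (discounted_sum q k (Suc n) + 1) * discount_weight q k (Suc n) i
       = discount_weight q k n i"
proof -
  have nz: "q ^ n * (q - 1) \<noteq> 0" "q ^ k - q ^ n \<noteq> 0" "q ^ k - q ^ Suc n \<noteq> 0"
    using power_diff_div_pos[of q n k] power_diff_div_pos[of q "Suc n" k] assms by auto
  have "discounted_sum q k (Suc n) = (q ^ k - q ^ Suc n) / (q ^ n * (q - 1))"
    using assms unfolding discounted_sum_def by (simp add: mult.assoc)
  then have "discounted_sum q k (Suc n) / (discounted_sum q k (Suc n) + 1) = (q ^ k - q ^ Suc n) / (q ^ k - q ^ n)"
    using nz(1) unfolding discounted_sum_Suc_plus_one[OF assms(1,2)] by simp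
  then show ?thesis using nz(3) unfolding discount_weight_def by simp
qed

lemma discounted_sum_last:
  fixes q :: real
  assumes "0 < q" "q \<noteq> 1" "1 \<le> k"
  shows "discounted_sum q k (k - 1) = q"
  using discounted_sum_Suc[OF assms(1,2), of k "k - 1"] assms(3) by (simp add: discounted_sum_def)

lemma ln_Z_star_discounted_step:
  fixes \<mu> :: real
  defines "q \<equiv> exp (-\<mu>)"
  assumes "\<mu> \<noteq> 0" "Suc n < k" "0 < x (Suc n)"
    and a: "a (Suc n) = discounted_sum q k (Suc n)"
    and Z_pos: "0 < Z_star k (\<lambda>_. 1) a x (Suc n)"
    and Z: "ln (Z_star k (\<lambda>_. 1) a x (Suc n)) = ln (discounted_sum q k (Suc n))
              - (\<Sum>i\<in>{Suc n..<k}. discount_weight q k (Suc n) i * (y i - \<mu>))"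
    and x: "ln (x (Suc n)) = y n"
  shows "ln (Z_star k (\<lambda>_. 1) a x n) = ln (discounted_sum q k n)
           - (\<Sum>i\<in>{n..<k}. discount_weight q k n i * (y i - \<mu>))"
proof -
  have q: "0 < q" "q \<noteq> 1" using assms(2) unfolding q_def by auto
  define A where "A = discounted_sum q k (Suc n)"
  have A_pos: "0 < A" unfolding A_def using discounted_sum_pos q \<open>Suc n < k\<close> by blast
  have "ln (Z_star k (\<lambda>_. 1) a x n)
      = ln (A + 1) + A / (A + 1) * (ln (Z_star k (\<lambda>_. 1) a x (Suc n)) - ln A) - y n"
    using ln_Z_star_step[of n k x a "\<lambda>_. 1"] assms A_pos unfolding A_def by simp
  also have "\<dots> = ln (A + 1) - (\<Sum>i\<in>{Suc n..<k}. discount_weight q k n i * (y i - \<mu>)) - y n"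
  proof -
    have "A / (A + 1) * (\<Sum>i\<in>{Suc n..<k}. discount_weight q k (Suc n) i * (y i - \<mu>))
        = (\<Sum>i\<in>{Suc n..<k}. discount_weight q k n i * (y i - \<mu>))"
      unfolding sum_distrib_left A_def discount_weight_Suc[OF q \<open>Suc n < k\<close>, symmetric]
      by (simp add: mult.assoc)
    then show ?thesis using Z unfolding A_def by simp
  qed
  also have "ln (A + 1) = ln (discounted_sum q k n) + \<mu>"
    using A_pos q unfolding discounted_sum_Suc[OF q, of k n] A_def by (simp add: ln_mult q_def)
  also have "y n = (\<Sum>i\<in>{n..<k}. discount_weight q k n i * (y i - \<mu>))
                   - (\<Sum>i\<in>{Suc n..<k}. discount_weight q k n i * (y i - \<mu>)) + \<mu>"
    using \<open>Suc n < k\<close> discount_weight_self[OF q, of n k] by (simp add: sum.atLeast_Suc_lessThan)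
  finally show ?thesis by simp
qed

definition log_return :: "(real \<Rightarrow> 'a \<Rightarrow> real) \<Rightarrow> nat \<Rightarrow> 'a \<Rightarrow> real" where
  "log_return X i \<omega> = ln (X (real (Suc i)) \<omega>) - ln (X (real i) \<omega>)"

lemma stable_wealth_process_returns_pos:
  "stable_wealth_process M X \<alpha> \<beta> \<sigma> \<mu> \<Longrightarrow> \<omega> \<in> space M \<Longrightarrow> 0 < returns X real \<omega> j"
  unfolding stable_wealth_process_def returns_def by simp

lemma stable_wealth_process_ln_returns:
  assumes "stable_wealth_process M X \<alpha> \<beta> \<sigma> \<mu>" "\<omega> \<in> space M"
  shows "ln (returns X real \<omega> (Suc i)) = log_return X i \<omega>"
proof -
  have "0 < X (real i) \<omega>" "0 < X (real (Suc i)) \<omega>"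
    using assms unfolding stable_wealth_process_def by simp_all
  then show ?thesis unfolding returns_def log_return_def by (simp add: ln_div)
qed

lemma stable_wealth_process_log_return_indep:
  assumes "stable_wealth_process M X \<alpha> \<beta> \<sigma> \<mu>"
  shows "prob_space.indep_vars M (\<lambda>_. borel) (log_return X) {..<n}"
proof -
  have "\<forall>(n::nat) (ts::nat \<Rightarrow> real). (\<forall>i\<le>n. 0 \<le> ts i) \<and> (\<forall>i<n. ts i < ts (Suc i)) \<longrightarrow>
      prob_space.indep_vars M (\<lambda>_. borel) (\<lambda>i \<omega>. ln (X (ts (Suc i)) \<omega>) - ln (X (ts i) \<omega>)) {..<n}"
    using assms unfolding stable_wealth_process_def by blast
  from this[rule_format, of n real] show ?thesis unfolding log_return_def by simp
qed

lemma stable_wealth_process_log_return_law: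
  assumes "stable_wealth_process M X \<alpha> \<beta> \<sigma> \<mu>"
  shows "has_stable_law M (log_return X i) \<alpha> \<beta> \<sigma> \<mu>"
proof -
  have "\<forall>s t. 0 \<le> s \<and> s < t \<longrightarrow>
      has_stable_law M (\<lambda>\<omega>. ln (X t \<omega> / X s \<omega>)) \<alpha> \<beta> (\<sigma> * (t - s) powr (1 / \<alpha>)) (\<mu> * (t - s))"
    using assms unfolding stable_wealth_process_def by blast
  from this[rule_format, of "real i" "real (Suc i)"]
  have "has_stable_law M (\<lambda>\<omega>. ln (returns X real \<omega> (Suc i))) \<alpha> \<beta> \<sigma> \<mu>"
    by (simp add: returns_def)
  moreover have "has_stable_law M (\<lambda>\<omega>. ln (returns X real \<omega> (Suc i))) \<alpha> \<beta> \<sigma> \<mu>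
      \<longleftrightarrow> has_stable_law M (log_return X i) \<alpha> \<beta> \<sigma> \<mu>"
    by (rule has_stable_law_cong) (rule stable_wealth_process_ln_returns[OF assms])
  ultimately show ?thesis by blast
qed

lemma has_stable_law_weighted_log_returns:
  assumes proc: "stable_wealth_process M X \<alpha> \<beta> \<sigma> \<mu>" and "\<alpha> \<noteq> 1"
    and "I \<noteq> {}" "I \<subseteq> {..<n}" and c: "\<forall>i\<in>I. 0 < c i"
    and f: "\<And>\<omega>. \<omega> \<in> space M \<Longrightarrow> f \<omega> = L - (\<Sum>i\<in>I. c i * (log_return X i \<omega> - \<mu>))"
  shows "has_stable_law M f \<alpha> (-\<beta>) (\<sigma> * (\<Sum>i\<in>I. c i powr \<alpha>) powr (1/\<alpha>)) L"
proof (rule has_stable_law_neg_weighted_sum[OF _ _ \<open>I \<noteq> {}\<close> _ _ \<open>\<alpha> \<noteq> 1\<close> c f])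
  show "prob_space M" using proc unfolding stable_wealth_process_def by blast
  show "finite I" using \<open>I \<subseteq> {..<n}\<close> finite_subset by blast
  show "prob_space.indep_vars M (\<lambda>_. borel) (log_return X) I"
    using prob_space.indep_vars_subset[OF \<open>prob_space M\<close> stable_wealth_process_log_return_indep[OF proc]
        \<open>I \<subseteq> {..<n}\<close>] .
  show "\<And>i. i \<in> I \<Longrightarrow> has_stable_law M (log_return X i) \<alpha> \<beta> \<sigma> \<mu>"
    using stable_wealth_process_log_return_law[OF proc] .
qed

lemma ln_Z_star_last_discounted:
  fixes \<mu> :: real
  defines "q \<equiv> exp (-\<mu>)"
  assumes proc: "stable_wealth_process M X \<alpha> \<beta> \<sigma> \<mu>" and "\<mu> \<noteq> 0" "1 \<le> k" "\<omega> \<in> space M"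
  shows "ln (Z_star k (\<lambda>_. 1) a (returns X real \<omega>) (k - 1)) = ln (discounted_sum q k (k - 1))
           - (\<Sum>i\<in>{k - 1..<k}. discount_weight q k (k - 1) i * (log_return X i \<omega> - \<mu>))"
proof -
  have q: "0 < q" "q \<noteq> 1" using \<open>\<mu> \<noteq> 0\<close> unfolding q_def by auto
  have last: "{k - 1..<k} = {k - 1}" using \<open>1 \<le> k\<close> by auto
  have "ln (Z_star k (\<lambda>_. 1) a (returns X real \<omega>) (k - 1)) = - log_return X (k - 1) \<omega>"
    using stable_wealth_process_returns_pos[OF proc \<open>\<omega> \<in> space M\<close>, of k]
      stable_wealth_process_ln_returns[OF proc \<open>\<omega> \<in> space M\<close>, of "k - 1"] \<open>1 \<le> k\<close>
    unfolding Z_star_last by (simp add: ln_div)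
  also have "\<dots> = ln (discounted_sum q k (k - 1))
      - (\<Sum>i\<in>{k - 1..<k}. discount_weight q k (k - 1) i * (log_return X i \<omega> - \<mu>))"
    using discounted_sum_last[OF q \<open>1 \<le> k\<close>] discount_weight_self[OF q, of "k - 1" k] \<open>1 \<le> k\<close>
    unfolding last by (simp add: q_def)
  finally show ?thesis .
qed

text \<open>The hypothesis on \<open>a\<^sub>j\<close> only fixes the location of the law of \<open>log Z\<^sub>j\<^sup>*\<close>; the affine
  form makes that law stable with location \<open>log (discounted_sum q k j)\<close>, and for \<open>\<alpha> \<noteq> 1\<close> the
  location of a stable law is unique.\<close>
lemma location_choice_eq_discounted_sum:
  fixes \<mu> :: real
  defines "q \<equiv> exp (-\<mu>)"
  assumes proc: "stable_wealth_process M X \<alpha> \<beta> \<sigma> \<mu>" and "\<alpha> \<noteq> 1" "\<mu> \<noteq> 0"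
    and a_choice: "\<forall>j\<in>{1..k-1}. 0 < a j \<and>
        (\<exists>\<alpha>' \<beta>' \<sigma>'. has_stable_law M
           (\<lambda>\<omega>. ln (Z_star k (\<lambda>_. 1) a (returns X real \<omega>) j)) \<alpha>' \<beta>' \<sigma>' (ln (a j)))"
    and j: "j \<in> {1..k-1}"
    and affine: "\<forall>\<omega>\<in>space M. ln (Z_star k (\<lambda>_. 1) a (returns X real \<omega>) j)
           = ln (discounted_sum q k j) - (\<Sum>i\<in>{j..<k}. discount_weight q k j i * (log_return X i \<omega> - \<mu>))"
  shows "a j = discounted_sum q k j"
proof -
  have q: "0 < q" "q \<noteq> 1" using \<open>\<mu> \<noteq> 0\<close> unfolding q_def by auto
  have "j < k" using j by auto
  have law: "has_stable_law M (\<lambda>\<omega>. ln (Z_star k (\<lambda>_. 1) a (returns X real \<omega>) j)) \<alpha> (-\<beta>)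
      (\<sigma> * (\<Sum>i\<in>{j..<k}. discount_weight q k j i powr \<alpha>) powr (1/\<alpha>)) (ln (discounted_sum q k j))"
  proof (rule has_stable_law_weighted_log_returns[OF proc \<open>\<alpha> \<noteq> 1\<close>])
    show "{j..<k} \<noteq> {}" "{j..<k} \<subseteq> {..<k}" using \<open>j < k\<close> by auto
    show "\<forall>i\<in>{j..<k}. 0 < discount_weight q k j i"
      using discount_weight_pos[OF q] \<open>j < k\<close> by simp
  qed (use affine in blast)
  obtain \<alpha>' \<beta>' \<sigma>' where a_pos: "0 < a j" and
    law': "has_stable_law M (\<lambda>\<omega>. ln (Z_star k (\<lambda>_. 1) a (returns X real \<omega>) j)) \<alpha>' \<beta>' \<sigma>' (ln (a j))"
    using a_choice j by blast
  have "ln (discounted_sum q k j) = ln (a j)"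
    by (rule has_stable_law_location_unique[OF law law' \<open>\<alpha> \<noteq> 1\<close>])
  then show ?thesis using a_pos discounted_sum_pos[OF q \<open>j < k\<close>] by simp
qed

lemma ln_Z_star_discounted:
  fixes \<mu> :: real
  defines "q \<equiv> exp (-\<mu>)"
  assumes proc: "stable_wealth_process M X \<alpha> \<beta> \<sigma> \<mu>" and "\<alpha> \<noteq> 1" "\<mu> \<noteq> 0"
    and a_choice: "\<forall>j\<in>{1..k-1}. 0 < a j \<and>
        (\<exists>\<alpha>' \<beta>' \<sigma>'. has_stable_law M
           (\<lambda>\<omega>. ln (Z_star k (\<lambda>_. 1) a (returns X real \<omega>) j)) \<alpha>' \<beta>' \<sigma>' (ln (a j)))"
    and "j < k"
  shows "\<forall>\<omega>\<in>space M. ln (Z_star k (\<lambda>_. 1) a (returns X real \<omega>) j)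
           = ln (discounted_sum q k j) - (\<Sum>i\<in>{j..<k}. discount_weight q k j i * (log_return X i \<omega> - \<mu>))"
proof -
  have "j \<le> k - 1" using \<open>j < k\<close> by simp
  then show ?thesis unfolding q_def
  proof (induction j rule: inc_induct)
    case base
    show ?case using ln_Z_star_last_discounted[OF proc \<open>\<mu> \<noteq> 0\<close>] \<open>j < k\<close> by simp
  next
    case (step n)
    have "Suc n < k" using step.hyps by simp
    have a: "a (Suc n) = discounted_sum (exp (-\<mu>)) k (Suc n)"
      using \<open>Suc n < k\<close> step.IH
      by (intro location_choice_eq_discounted_sum[OF proc \<open>\<alpha> \<noteq> 1\<close> \<open>\<mu> \<noteq> 0\<close> a_choice]) auto
    show ?case
    proof
      fix \<omega> assume "\<omega> \<in> space M"
      note returns_pos = stable_wealth_process_returns_pos[OF proc \<open>\<omega> \<in> space M\<close>]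
      have "0 < Z_star k (\<lambda>_. 1) a (returns X real \<omega>) (Suc n)"
        using Z_star_le_W_star[of k "Suc n" "returns X real \<omega>" "\<lambda>_. 1" a] \<open>Suc n < k\<close> a_choice returns_pos
        by simp
      from ln_Z_star_discounted_step[OF \<open>\<mu> \<noteq> 0\<close> \<open>Suc n < k\<close> returns_pos a this
          step.IH[rule_format, OF \<open>\<omega> \<in> space M\<close>] stable_wealth_process_ln_returns[OF proc \<open>\<omega> \<in> space M\<close>]]
      show "ln (Z_star k (\<lambda>_. 1) a (returns X real \<omega>) n) = ln (discounted_sum (exp (-\<mu>)) k n)
          - (\<Sum>i\<in>{n..<k}. discount_weight (exp (-\<mu>)) k n i * (log_return X i \<omega> - \<mu>))" .
    qed
  qed
qed

lemma discount_weight_zero: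
  fixes \<mu> :: real
  assumes "\<mu> \<noteq> 0" "i \<le> k" "0 < k"
  shows "discount_weight (exp (-\<mu>)) k 0 i = 1 - (exp (-\<mu> * real i) - 1) / (exp (-\<mu> * real k) - 1)"
proof -
  have pow: "exp (-\<mu> * real n) = exp (-\<mu>) ^ n" for n
    by (simp add: exp_of_nat_mult[symmetric] mult.commute)
  have "exp (-\<mu>) ^ k - 1 \<noteq> 0"
    using power_diff_div_pos[of "exp (-\<mu>)" 0 k] assms by auto
  then show ?thesis unfolding discount_weight_def pow by (simp add: field_simps)
qed

lemma sum_discount_weight_zero_powr:
  fixes \<mu> :: real
  assumes "\<mu> \<noteq> 0" "1 \<le> k"
  shows "(\<Sum>i\<in>{0..<k}. discount_weight (exp (-\<mu>)) k 0 i powr \<alpha>)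
       = 1 + (\<Sum>j=1..k-1. (1 - (exp (-\<mu> * real j) - 1) / (exp (-\<mu> * real k) - 1)) powr \<alpha>)"
proof -
  have "{0..<k} = insert 0 {1..k-1}" using assms(2) by auto
  moreover have "discount_weight (exp (-\<mu>)) k 0 0 = 1"
    using discount_weight_self[of "exp (-\<mu>)" 0 k] assms by simp
  moreover have "(\<Sum>j=1..k-1. discount_weight (exp (-\<mu>)) k 0 j powr \<alpha>)
      = (\<Sum>j=1..k-1. (1 - (exp (-\<mu> * real j) - 1) / (exp (-\<mu> * real k) - 1)) powr \<alpha>)"
    using assms by (intro sum.cong refl arg_cong[where f = "\<lambda>r. r powr \<alpha>"] discount_weight_zero) auto
  ultimately show ?thesis by simp
qed

lemma ln_discounted_sum_zero:
  fixes \<mu> :: real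
  assumes "\<mu> \<noteq> 0" "1 \<le> k"
  shows "ln (discounted_sum (exp (-\<mu>)) k 0) = -\<mu> + ln ((exp (-\<mu> * real k) - 1) / (exp (-\<mu>) - 1))"
proof -
  have "exp (-\<mu> * real k) = exp (-\<mu>) ^ k"
    by (simp add: exp_of_nat_mult[symmetric] mult.commute)
  moreover have "ln (discounted_sum (exp (-\<mu>)) k 0)
      = ln (exp (-\<mu>)) + ln ((exp (-\<mu>) ^ k - 1) / (exp (-\<mu>) - 1))"
  proof -
    have "discounted_sum (exp (-\<mu>)) k 0 = exp (-\<mu>) * ((exp (-\<mu>) ^ k - 1) / (exp (-\<mu>) - 1))"
      unfolding discounted_sum_def by simp
    moreover have "0 < (exp (-\<mu>) ^ k - 1) / (exp (-\<mu>) - 1)"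
      using power_diff_div_pos[of "exp (-\<mu>)" 0 k] assms by simp
    ultimately show ?thesis by (simp only: ln_mult_pos exp_gt_zero)
  qed
  ultimately show ?thesis by simp
qed

theorem theorem5:
  fixes M :: "'a measure" and X :: "real \<Rightarrow> 'a \<Rightarrow> real"
    and \<alpha> \<beta> \<sigma> \<mu> :: real and k :: nat and a :: "nat \<Rightarrow> real"
  assumes par: "0 < \<alpha>" "\<alpha> \<le> 2" "-1 \<le> \<beta>" "\<beta> \<le> 1" "0 < \<sigma>"
    and proc: "stable_wealth_process M X \<alpha> \<beta> \<sigma> \<mu>"
    and "\<alpha> \<noteq> 1" and "\<mu> \<noteq> 0" and "1 \<le> k"
    and a_choice: "\<forall>j\<in>{1..k-1}. 0 < a j \<and>
        (\<exists>\<alpha>' \<beta>' \<sigma>'. has_stable_law M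
           (\<lambda>\<omega>. ln (Z_star k (\<lambda>_. 1) a (returns X real \<omega>) j)) \<alpha>' \<beta>' \<sigma>' (ln (a j)))"
  shows "(AE \<omega> in M. Z_star k (\<lambda>_. 1) a (returns X real \<omega>) 0
                       \<le> P_star k (\<lambda>_. 1) (returns X real \<omega>))
     \<and> has_stable_law M (\<lambda>\<omega>. ln (Z_star k (\<lambda>_. 1) a (returns X real \<omega>) 0)) \<alpha> (-\<beta>)
         ((\<sigma> powr \<alpha> * (1 + (\<Sum>j=1..k-1.
             (1 - (exp (-\<mu> * real j) - 1) / (exp (-\<mu> * real k) - 1)) powr \<alpha>))) powr (1 / \<alpha>))
         (-\<mu> + ln ((exp (-\<mu> * real k) - 1) / (exp (-\<mu>) - 1)))"
proof
  show "AE \<omega> in M. Z_star k (\<lambda>_. 1) a (returns X real \<omega>) 0 \<le> P_star k (\<lambda>_. 1) (returns X real \<omega>)"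
    using Z_star_le_W_star[of k 0] stable_wealth_process_returns_pos[OF proc] a_choice \<open>1 \<le> k\<close>
    unfolding P_star_def by (intro AE_I2) simp
  define q where "q = exp (-\<mu>)"
  define S where "S = (\<Sum>j=1..k-1. (1 - (exp (-\<mu> * real j) - 1) / (exp (-\<mu> * real k) - 1)) powr \<alpha>)"
  have "0 \<le> S" unfolding S_def by (intro sum_nonneg) simp
  then have scale: "\<sigma> * (1 + S) powr (1/\<alpha>) = (\<sigma> powr \<alpha> * (1 + S)) powr (1 / \<alpha>)"
    using par by (simp add: powr_mult powr_powr)
  have "has_stable_law M (\<lambda>\<omega>. ln (Z_star k (\<lambda>_. 1) a (returns X real \<omega>) 0)) \<alpha> (-\<beta>)
      (\<sigma> * (\<Sum>i\<in>{0..<k}. discount_weight q k 0 i powr \<alpha>) powr (1/\<alpha>)) (ln (discounted_sum q k 0))"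
    using ln_Z_star_discounted[OF proc \<open>\<alpha> \<noteq> 1\<close> \<open>\<mu> \<noteq> 0\<close> a_choice] discount_weight_pos[of q _ k 0]
      \<open>1 \<le> k\<close> \<open>\<mu> \<noteq> 0\<close>
    unfolding q_def by (intro has_stable_law_weighted_log_returns[OF proc \<open>\<alpha> \<noteq> 1\<close>, of _ k]) auto
  then show "has_stable_law M (\<lambda>\<omega>. ln (Z_star k (\<lambda>_. 1) a (returns X real \<omega>) 0)) \<alpha> (-\<beta>)
      ((\<sigma> powr \<alpha> * (1 + S)) powr (1 / \<alpha>)) (-\<mu> + ln ((exp (-\<mu> * real k) - 1) / (exp (-\<mu>) - 1)))"
    unfolding q_def sum_discount_weight_zero_powr[OF \<open>\<mu> \<noteq> 0\<close> \<open>1 \<le> k\<close>]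
      ln_discounted_sum_zero[OF \<open>\<mu> \<noteq> 0\<close> \<open>1 \<le> k\<close>] S_def[symmetric] scale[symmetric] .
qed

end
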